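(* Let $T(n)=(3n+1)/2^{v_2(3n+1)}$ be the Syracuse map and, for odd $n$, $L(n)=v_2(n+1)-1$. The natural density, among the odd positive integers, of those odd $n$ with $T^{L(n)+1}(n)<n$ equals $$P_{1\mathrm{cyc}}=\sum_{\ell\ge 0}2^{-(\ell+1)}\cdot 2^{-\lfloor(\log_2 3-1)(\ell+1)\rfloor}=0.71372549767589\ldots$$
   Context: $v_2$ is the $2$-adic valuation; $T^j$ the $j$-th iterate. *)

theory Defs
  imports Complex_Main "HOL-Computational_Algebra.Computational_Algebra"
begin

definition v2 :: "nat \<Rightarrow> nat" where
  "v2 n = multiplicity (2::nat) n"

definition syr :: "nat \<Rightarrow> nat" where
  "syr n = (3 * n + 1) div 2 ^ v2 (3 * n + 1)"

text \<open>L(n) = v2(n+1) - 1 (for odd n, v2(n+1) \<ge> 1, so no truncation occurs).\<close>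
definition Lfun :: "nat \<Rightarrow> nat" where
  "Lfun n = v2 (n + 1) - 1"

end

theory Submission
  imports Defs "HOL-Number_Theory.Cong"
begin

(* Write n + 1 = 2^(l+1) m with m odd, so l = L(n). The first l Syracuse steps are
   x -> (3x+1)/2, giving T^l(n) = 2 3^l m - 1, and the next step gives
   T^(l+1)(n) = (3^(l+1) m - 1) / 2^k with k = v2(3^(l+1) m - 1).
   With c = floor((log2 3 - 1)(l+1)) we have 2^(c+l+1) <= 3^(l+1) < 2^(c+l+2), so descent
   T^(l+1)(n) < n forces k > c, and conversely k > c gives descent as soon as m >= 2^(c+1).
   "L(n) = l and k > c" is a single residue class modulo 2^(l+c+2); these classes are
   disjoint, each misses only finitely many descending n, and the n with L(n) >= L form
   one residue class of density 2^-(L+1). Summing the densities 2^-(l+c+2) and dividing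
   by the density 1/2 of the odd numbers gives the series. *)

section \<open>Densities of unions of residue classes\<close>

definition count_below :: "nat set \<Rightarrow> nat \<Rightarrow> nat" where
  "count_below S N = card {n. n < N \<and> n \<in> S}"

lemma count_below_residue_class:
  fixes q t :: nat
  assumes "t < q"
  shows "count_below {n. n mod q = t} N = (N + q - 1 - t) div q"
proof -
  have bound: "q * k + t < N \<longleftrightarrow> k < (N + q - 1 - t) div q" for k
  proof -
    have "k < (N + q - 1 - t) div q \<longleftrightarrow> Suc k * q \<le> N + q - 1 - t"
      using assms by (simp add: less_eq_div_iff_mult_less_eq Suc_le_eq[symmetric])
    then show ?thesis using assms by (simp add: algebra_simps) linarith
  qed
  have "{n. n < N \<and> n \<in> {n. n mod q = t}} = (\<lambda>k. q * k + t) ` {..< (N + q - 1 - t) div q}"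
  proof (intro set_eqI iffI)
    fix n assume "n \<in> {n. n < N \<and> n \<in> {n. n mod q = t}}"
    then have "n = q * (n div q) + t" "n < N" by (auto simp: div_mult_mod_eq[symmetric])
    then show "n \<in> (\<lambda>k. q * k + t) ` {..< (N + q - 1 - t) div q}"
      using bound[of "n div q"] by (intro image_eqI[of n _ "n div q"]) simp_all
  next
    fix n assume "n \<in> (\<lambda>k. q * k + t) ` {..< (N + q - 1 - t) div q}"
    then obtain k where "n = q * k + t" "k < (N + q - 1 - t) div q" by blast
    then show "n \<in> {n. n < N \<and> n \<in> {n. n mod q = t}}"
      using bound[of k] assms by simp
  qed
  moreover have "inj (\<lambda>k. q * k + t)"
    using assms by (auto intro: injI)
  ultimately show ?thesis
    unfolding count_below_def by (simp add: card_image inj_on_def)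
qed

lemma count_below_residue_class_approx:
  fixes q t :: nat
  assumes "t < q"
  shows "\<bar>real (count_below {n. n mod q = t} N) - real N / real q\<bar> \<le> 1"
proof -
  define c where "c = (N + q - 1 - t) div q"
  have "q * c \<le> N + q - 1 - t" "N + q - 1 - t < q + q * c"
    unfolding c_def using assms by (simp_all add: times_div_less_eq_dividend dividend_less_times_div)
  then have "real (c * q) \<le> real (N + q)" "real N < real ((c + 1) * q)"
    using assms by (simp_all only: of_nat_le_iff of_nat_less_iff) (simp_all add: mult.commute)
  then have le: "real c * real q \<le> real N + real q" and less: "real N < (real c + 1) * real q"
    by (simp_all add: distrib_right)
  have q: "real q > 0" using assms by simp
  have "real c \<le> (real N + real q) / real q"
    using le by (subst pos_le_divide_eq[OF q])
  also have "\<dots> = real N / real q + 1"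
    using q by (simp add: add_divide_distrib)
  finally have "real c \<le> real N / real q + 1" .
  moreover have "real N / real q < real c + 1"
    using less by (subst pos_divide_less_eq[OF q])
  ultimately show ?thesis
    unfolding count_below_residue_class[OF assms] c_def[symmetric] by linarith
qed

lemma density_by_uniform_bounds:
  fixes f e K :: "nat \<Rightarrow> real"
  assumes "e \<longlonglongrightarrow> 0" and bound: "\<And>L N. \<bar>f N - real N * s\<bar> \<le> real N * e L + K L"
  shows "(\<lambda>N. f N / real N) \<longlonglongrightarrow> s"
proof (rule LIMSEQ_I)
  fix r :: real assume "0 < r"
  then obtain L where L: "\<bar>e L\<bar> < r / 2"
    using LIMSEQ_D[OF \<open>e \<longlonglongrightarrow> 0\<close>, of "r / 2"] by auto
  obtain N0 where N0: "\<forall>N\<ge>N0. \<bar>K L / real N\<bar> < r / 2"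
    using LIMSEQ_D[OF lim_const_over_n[of "K L"], of "r / 2"] \<open>0 < r\<close> by auto
  have close: "\<bar>f N / real N - s\<bar> < r" if "N \<ge> max N0 1" for N
  proof -
    have N: "real N > 0" using that by simp
    have "f N / real N - s = (f N - real N * s) / real N"
      using N by (simp add: diff_divide_distrib)
    then have "\<bar>f N / real N - s\<bar> = \<bar>f N - real N * s\<bar> / real N"
      using N by simp
    also have "\<dots> \<le> (real N * e L + K L) / real N"
      using N by (intro divide_right_mono bound) simp
    also have "\<dots> = e L + K L / real N"
      using N by (simp add: add_divide_distrib)
    also have "\<dots> < r"
    proof -
      have "\<bar>K L / real N\<bar> < r / 2" using N0 that by simp
      then show ?thesis using L by (simp only: abs_less_iff) linarith
    qed
    finally show ?thesis .
  qed
  then show "\<exists>N0. \<forall>N\<ge>N0. norm (f N / real N - s) < r"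
    by (intro exI[of _ "max N0 1"]) simp
qed

lemma density_residue_class:
  fixes q t :: nat
  assumes "t < q"
  shows "(\<lambda>N. real (count_below {n. n mod q = t} N) / real N) \<longlonglongrightarrow> 1 / real q"
proof (rule density_by_uniform_bounds[where e = "\<lambda>_. 0" and K = "\<lambda>_. 1"])
  show "\<bar>real (count_below {n. n mod q = t} N) - real N * (1 / real q)\<bar> \<le> real N * 0 + 1" for N
    using count_below_residue_class_approx[OF assms, of N] by simp
qed simp

lemma count_below_le_UN:
  fixes L :: nat
  assumes "G \<subseteq> (\<Union>l<L. A l) \<union> R"
  shows "count_below G N \<le> (\<Sum>l<L. count_below (A l) N) + count_below R N"
proof -
  have "count_below G N \<le> card ((\<Union>l<L. {n. n < N \<and> n \<in> A l}) \<union> {n. n < N \<and> n \<in> R})"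
    unfolding count_below_def using assms by (intro card_mono finite_UnI finite_UN_I) auto
  also have "\<dots> \<le> card (\<Union>l<L. {n. n < N \<and> n \<in> A l}) + count_below R N"
    unfolding count_below_def by (rule card_Un_le)
  also have "card (\<Union>l<L. {n. n < N \<and> n \<in> A l}) \<le> (\<Sum>l<L. count_below (A l) N)"
    unfolding count_below_def by (rule card_UN_le) simp
  finally show ?thesis by simp
qed

lemma sum_count_below_le:
  fixes A :: "nat \<Rightarrow> nat set" and L :: nat
  assumes disjoint: "\<And>i j. i \<noteq> j \<Longrightarrow> A i \<inter> A j = {}" and "\<And>l. A l \<inter> {b l..} \<subseteq> G"
  shows "(\<Sum>l<L. count_below (A l) N) \<le> count_below G N + (\<Sum>l<L. b l)"
proof -
  have "count_below (A l) N \<le> count_below (A l \<inter> {b l..}) N + b l" for l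
  proof -
    have "count_below (A l) N \<le> card ({n. n < N \<and> n \<in> A l \<inter> {b l..}} \<union> {..<b l})"
      unfolding count_below_def by (intro card_mono) auto
    also have "\<dots> \<le> count_below (A l \<inter> {b l..}) N + b l"
      unfolding count_below_def using card_Un_le[of _ "{..<b l}"] by simp
    finally show ?thesis .
  qed
  then have "(\<Sum>l<L. count_below (A l) N) \<le> (\<Sum>l<L. count_below (A l \<inter> {b l..}) N) + (\<Sum>l<L. b l)"
    by (simp add: sum_mono flip: sum.distrib)
  also have "(\<Sum>l<L. count_below (A l \<inter> {b l..}) N) = card (\<Union>l<L. {n. n < N \<and> n \<in> A l \<inter> {b l..}})"
    unfolding count_below_def
    by (rule card_UN_disjoint[symmetric]) (use disjoint in auto)
  also have "\<dots> \<le> count_below G N"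
    unfolding count_below_def using assms(2) by (intro card_mono) auto
  finally show ?thesis by simp
qed

lemma density_between_residue_classes:
  fixes G :: "nat set" and A R :: "nat \<Rightarrow> nat set" and q p b :: "nat \<Rightarrow> nat"
  assumes A: "\<And>l. \<exists>t<q l. A l = {n. n mod q l = t}"
    and disjoint: "\<And>i j. i \<noteq> j \<Longrightarrow> A i \<inter> A j = {}"
    and lower: "\<And>l. A l \<inter> {b l..} \<subseteq> G"
    and R: "\<And>L. \<exists>t<p L. R L = {n. n mod p L = t}"
    and upper: "\<And>L. G \<subseteq> (\<Union>l<L. A l) \<union> R L"
    and p: "(\<lambda>L. 1 / real (p L)) \<longlonglongrightarrow> 0"
    and q: "summable (\<lambda>l. 1 / real (q l))"
  shows "(\<lambda>N. real (count_below G N) / real N) \<longlonglongrightarrow> (\<Sum>l. 1 / real (q l))"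
proof -
  define d where "d l = 1 / real (q l)" for l
  have approx_A: "real N * d l - 1 \<le> real (count_below (A l) N)"
    "real (count_below (A l) N) \<le> real N * d l + 1" for l N
  proof -
    obtain t where "t < q l" "A l = {n. n mod q l = t}" using A by blast
    then have "\<bar>real (count_below (A l) N) - real N * d l\<bar> \<le> 1"
      using count_below_residue_class_approx[of t "q l" N] by (simp add: d_def)
    then show "real N * d l - 1 \<le> real (count_below (A l) N)"
      "real (count_below (A l) N) \<le> real N * d l + 1" by (simp_all add: abs_le_iff)
  qed
  have approx_R: "real (count_below (R L) N) \<le> real N * (1 / real (p L)) + 1" for L N
  proof -
    obtain t where "t < p L" "R L = {n. n mod p L = t}" using R by blast
    then show ?thesis
      using count_below_residue_class_approx[of t "p L" N] by (simp add: abs_le_iff)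
  qed
  have summable_d: "summable d"
    using q unfolding d_def .
  have partial_le: "(\<Sum>l<L. d l) \<le> suminf d" for L
    using summable_d by (rule sum_le_suminf) (auto simp: d_def)
  show ?thesis
    unfolding d_def[symmetric]
  proof (rule density_by_uniform_bounds)
    show "(\<lambda>L. (suminf d - (\<Sum>l<L. d l)) + 1 / real (p L)) \<longlonglongrightarrow> 0"
      using tendsto_add[OF tendsto_diff[OF tendsto_const[of "suminf d"] summable_LIMSEQ[OF summable_d]] p]
      by simp
    fix L N
    have "real (count_below G N) \<le> (\<Sum>l<L. real (count_below (A l) N)) + real (count_below (R L) N)"
      using count_below_le_UN[OF upper, where L=L and N=N] by (simp flip: of_nat_sum of_nat_add)
    also have "\<dots> \<le> (\<Sum>l<L. real N * d l + 1) + (real N * (1 / real (p L)) + 1)"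
      by (intro add_mono sum_mono approx_A approx_R)
    finally have up: "real (count_below G N) \<le> real N * (\<Sum>l<L. d l) + real L + real N * (1 / real (p L)) + 1"
      by (simp add: sum.distrib sum_distrib_left)
    have "(\<Sum>l<L. real N * d l - 1) \<le> (\<Sum>l<L. real (count_below (A l) N))"
      by (intro sum_mono approx_A)
    also have "\<dots> \<le> real (count_below G N) + (\<Sum>l<L. real (b l))"
      using sum_count_below_le[OF disjoint lower, where L=L and N=N] by (simp flip: of_nat_sum of_nat_add)
    finally have low: "real N * (\<Sum>l<L. d l) - real L \<le> real (count_below G N) + (\<Sum>l<L. real (b l))"
      by (simp add: sum_subtractf sum_distrib_left)
    have "real N * (\<Sum>l<L. d l) \<le> real N * suminf d"
      using partial_le by (intro mult_left_mono) auto
    moreover have "0 \<le> (\<Sum>l<L. real (b l))" "0 \<le> real N * (1 / real (p L))"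
      by (simp_all add: sum_nonneg)
    ultimately show "\<bar>real (count_below G N) - real N * suminf d\<bar>
        \<le> real N * ((suminf d - (\<Sum>l<L. d l)) + 1 / real (p L)) + (real L + 1 + (\<Sum>l<L. real (b l)))"
      using up low unfolding distrib_left right_diff_distrib abs_le_iff by (intro conjI) linarith+
  qed
qed

section \<open>The 2-adic valuation and the Syracuse trajectory\<close>

lemma v2_eqI: "x = 2 ^ k * y \<Longrightarrow> odd y \<Longrightarrow> v2 x = k"
  unfolding v2_def by (rule multiplicity_decomposeI) auto

lemma v2_double: "x \<noteq> 0 \<Longrightarrow> v2 (2 * x) = Suc (v2 x)"
  unfolding v2_def by (rule multiplicity_times_same) auto

lemma v2_odd: "odd x \<Longrightarrow> v2 x = 0"
  unfolding v2_def by (rule not_dvd_imp_multiplicity_0)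

lemma pow_v2_dvd: "2 ^ v2 x dvd x"
  unfolding v2_def by (rule multiplicity_dvd)

lemma pow_dvd_iff_le_v2: "x \<noteq> 0 \<Longrightarrow> 2 ^ k dvd x \<longleftrightarrow> k \<le> v2 x"
  unfolding v2_def by (rule power_dvd_iff_le_multiplicity) auto

lemma v2_decompose:
  assumes "x \<noteq> 0"
  obtains y where "x = 2 ^ v2 x * y" and "odd y"
  using multiplicity_decompose'[of x 2] assms unfolding v2_def by auto

lemma syr_double_pred:
  assumes "0 < y"
  shows "syr (2 * y - 1) = (3 * y - 1) div 2 ^ v2 (3 * y - 1)"
proof -
  have "3 * (2 * y - 1) + 1 = 2 * (3 * y - 1)" and "3 * y - 1 \<noteq> 0"
    using assms by simp_all
  then show ?thesis
    unfolding syr_def by (simp add: v2_double div_mult2_eq)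
qed

lemma syr_double_pred_even: "even y \<Longrightarrow> 0 < y \<Longrightarrow> syr (2 * y - 1) = 3 * y - 1"
  using syr_double_pred[of y] v2_odd[of "3 * y - 1"] by simp

lemma funpow_syr_pow2_pred:
  "even y \<Longrightarrow> 0 < y \<Longrightarrow> (syr ^^ j) (2 ^ j * y - 1) = 3 ^ j * y - 1"
proof (induction j arbitrary: y)
  case 0
  then show ?case by simp
next
  case (Suc j)
  have "(syr ^^ Suc j) (2 ^ Suc j * y - 1) = (syr ^^ j) (syr (2 * (2 ^ j * y) - 1))"
    by (simp add: funpow_Suc_right mult.assoc del: funpow.simps)
  also have "syr (2 * (2 ^ j * y) - 1) = 2 ^ j * (3 * y) - 1"
    using Suc.prems syr_double_pred_even[of "2 ^ j * y"] by (simp add: mult.left_commute)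
  also have "(syr ^^ j) \<dots> = 3 ^ Suc j * y - 1"
    using Suc by (simp add: mult.assoc)
  finally show ?case .
qed

lemma funpow_syr_climb:
  assumes "n + 1 = 2 ^ (l + 1) * m" and "0 < m"
  shows "(syr ^^ (l + 1)) n = (3 ^ (l + 1) * m - 1) div 2 ^ v2 (3 ^ (l + 1) * m - 1)"
proof -
  have "n = 2 ^ l * (2 * m) - 1"
    using assms(1) by (simp add: mult.assoc mult.left_commute)
  then have "(syr ^^ l) n = 2 * (3 ^ l * m) - 1"
    using funpow_syr_pow2_pred[of "2 * m" l] assms(2) by (simp add: mult.left_commute)
  then have "(syr ^^ (l + 1)) n = syr (2 * (3 ^ l * m) - 1)"
    by simp
  also have "\<dots> = (3 ^ (l + 1) * m - 1) div 2 ^ v2 (3 ^ (l + 1) * m - 1)"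
    using assms(2) syr_double_pred[of "3 ^ l * m"] by (simp add: mult.assoc)
  finally show ?thesis .
qed

lemma funpow_syr_descent_imp_cong:
  assumes n: "n + 1 = 2 ^ (l + 1) * m" and "0 < m"
    and gap: "2 ^ (c + l + 1) \<le> (3::nat) ^ (l + 1)"
    and descent: "(syr ^^ (l + 1)) n < n"
  shows "[3 ^ (l + 1) * m = 1] (mod 2 ^ (c + 1))"
proof -
  define x where "x = 3 ^ (l + 1) * m - 1"
  define k where "k = v2 x"
  have "3 \<le> 3 ^ (l + 1) * m"
    using \<open>0 < m\<close> mult_le_mono[of 3 "3 ^ (l + 1)" 1 m] by simp
  then have "1 \<le> 3 ^ (l + 1) * m" and "x \<noteq> 0"
    unfolding x_def by arith+
  have "c + 1 \<le> k"
  proof (rule ccontr)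
    assume "\<not> c + 1 \<le> k"
    then have "2 ^ k * 2 ^ (l + 1) \<le> (2::nat) ^ c * 2 ^ (l + 1)"
      by (intro mult_right_mono power_increasing) auto
    also have "\<dots> \<le> 3 ^ (l + 1)"
      using gap by (simp add: power_add mult.assoc)
    finally have "2 ^ k * (2 ^ (l + 1) * m) \<le> 3 ^ (l + 1) * m"
      by (simp add: mult.assoc[symmetric])
    moreover have "2 ^ k * n = 2 ^ k * (2 ^ (l + 1) * m) - 2 ^ k"
      using n by (metis add_diff_cancel_right' diff_mult_distrib2 mult_1_right)
    moreover have "1 \<le> (2::nat) ^ k" by simp
    ultimately have "2 ^ k * n \<le> x"
      unfolding x_def by linarith
    then have "n \<le> x div 2 ^ k"
      by (simp add: less_eq_div_iff_mult_less_eq mult.commute)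
    with descent show False
      using funpow_syr_climb[OF n \<open>0 < m\<close>] unfolding x_def k_def by simp
  qed
  then have "2 ^ (c + 1) dvd x"
    using pow_dvd_iff_le_v2[OF \<open>x \<noteq> 0\<close>, of "c + 1"] unfolding k_def by blast
  then show ?thesis
    using cong_altdef_nat[OF \<open>1 \<le> 3 ^ (l + 1) * m\<close>] unfolding x_def by simp
qed

lemma cong_imp_funpow_syr_descent:
  assumes n: "n + 1 = 2 ^ (l + 1) * m"
    and gap: "(3::nat) ^ (l + 1) < 2 ^ (c + l + 2)"
    and cong: "[3 ^ (l + 1) * m = 1] (mod 2 ^ (c + 1))"
    and large: "2 ^ (c + 1) \<le> m"
  shows "(syr ^^ (l + 1)) n < n"
proof -
  define W :: nat where "W = 2 ^ (c + 1)"
  define x where "x = 3 ^ (l + 1) * m - 1"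
  define k where "k = v2 x"
  have "0 < m"
    using large less_le_trans[of 0 "2 ^ (c + 1)" m] by simp
  have "3 \<le> 3 ^ (l + 1) * m"
    using \<open>0 < m\<close> mult_le_mono[of 3 "3 ^ (l + 1)" 1 m] by simp
  then have "x \<noteq> 0"
    unfolding x_def by arith
  have "W dvd x"
    using cong_to_1_nat[OF cong] unfolding W_def x_def .
  then have "c + 1 \<le> k"
    using pow_dvd_iff_le_v2[OF \<open>x \<noteq> 0\<close>, of "c + 1"] unfolding W_def k_def by blast
  then have "W \<le> 2 ^ k"
    unfolding W_def by (rule power_increasing) simp
  have T: "(syr ^^ (l + 1)) n * 2 ^ k = x"
    using funpow_syr_climb[OF n \<open>0 < m\<close>] pow_v2_dvd[of x] unfolding x_def k_def by simp
  have "3 ^ (l + 1) + 1 \<le> W * 2 ^ (l + 1)"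
    using gap unfolding W_def by (simp add: power_add[symmetric])
  then have "3 ^ (l + 1) * m + m \<le> W * (2 ^ (l + 1) * m)"
    by (metis add_mult_distrib mult.assoc mult_1 mult_le_mono1)
  moreover have "W * n + W = W * (2 ^ (l + 1) * m)"
    using n by (metis add_mult_distrib2 mult_1_right)
  moreover have "x + 1 = 3 ^ (l + 1) * m"
    using \<open>3 \<le> 3 ^ (l + 1) * m\<close> unfolding x_def by simp
  ultimately have "x < W * n"
    using large unfolding W_def by linarith
  then have "W * (syr ^^ (l + 1)) n < W * n"
    using T \<open>W \<le> 2 ^ k\<close> by (metis mult.commute mult_le_mono1 order.strict_trans1)
  then show ?thesis by simp
qed

lemma Lfun_eqI: "n + 1 = 2 ^ (l + 1) * m \<Longrightarrow> odd m \<Longrightarrow> Lfun n = l"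
  unfolding Lfun_def using v2_eqI[of "n + 1" "l + 1" m] by simp

lemma odd_Lfun_decompose:
  assumes "odd n"
  obtains m where "n + 1 = 2 ^ (Lfun n + 1) * m" and "odd m"
proof -
  obtain m where m: "n + 1 = 2 ^ v2 (n + 1) * m" "odd m"
    using v2_decompose[of "n + 1"] by auto
  have "1 \<le> v2 (n + 1)"
    using pow_dvd_iff_le_v2[of "n + 1" 1] assms by simp
  then have "Lfun n + 1 = v2 (n + 1)"
    unfolding Lfun_def by simp
  with m that show ?thesis by metis
qed

section \<open>Descent classes\<close>

definition log_gap :: "nat \<Rightarrow> nat" where
  "log_gap l = nat \<lfloor>(log 2 3 - 1) * real (l + 1)\<rfloor>"

lemma floor_eq_log_gap: "\<lfloor>(log 2 3 - 1) * real (l + 1)\<rfloor> = int (log_gap l)"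
proof -
  have "1 < log 2 3"
    by (subst less_log_iff) auto
  then show ?thesis
    unfolding log_gap_def by simp
qed

lemma log_gap_bounds:
  "2 ^ (log_gap l + l + 1) \<le> (3::nat) ^ (l + 1)" "(3::nat) ^ (l + 1) < 2 ^ (log_gap l + l + 2)"
proof -
  have "log 2 (real (3 ^ (l + 1))) = real (l + 1) * log 2 3"
    using log_nat_power[of "3::real" 2 "l + 1"] by simp
  also have "\<dots> = (log 2 3 - 1) * real (l + 1) + real (l + 1)"
    by (simp add: algebra_simps)
  finally have "\<lfloor>log 2 (real (3 ^ (l + 1)))\<rfloor> = int (log_gap l + l + 1)"
    using floor_eq_log_gap[of l] by simp
  then show "2 ^ (log_gap l + l + 1) \<le> (3::nat) ^ (l + 1)" "(3::nat) ^ (l + 1) < 2 ^ (log_gap l + l + 2)"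
    using floor_log_nat_eq_powr_iff[of 2 "3 ^ (l + 1)" "log_gap l + l + 1"] by simp_all
qed

lemma mod_eq_pred_if_dvd_succ: "0 < q \<Longrightarrow> q dvd n + 1 \<Longrightarrow> n mod q = q - 1"
  for q n :: nat
  by (metis One_nat_def Suc_eq_plus1 diff_Suc_1 dvd_imp_mod_0 mod_Suc nat.distinct(1))

lemma cong_succ_residue_class:
  fixes q s :: nat
  assumes "0 < q"
  shows "\<exists>t<q. {n. [n + 1 = s] (mod q)} = {n. n mod q = t}"
proof (intro exI conjI)
  have "[s + q - 1 + 1 = s] (mod q)"
    using assms by (simp add: cong_def)
  then have "[n + 1 = s] (mod q) \<longleftrightarrow> [n = s + q - 1] (mod q)" for n
    by (metis cong_add_rcancel_nat cong_sym cong_trans)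
  then show "{n. [n + 1 = s] (mod q)} = {n. n mod q = (s + q - 1) mod q}"
    by (simp add: cong_def)
qed (use assms in simp)

lemma multiple_cong_iff:
  fixes a u w y x :: nat
  assumes inverse: "[a * u = 1] (mod w)" and "0 < y"
  shows "(\<exists>m. x = y * m \<and> [a * m = 1] (mod w)) \<longleftrightarrow> [x = y * u] (mod y * w)"
proof
  assume "\<exists>m. x = y * m \<and> [a * m = 1] (mod w)"
  then obtain m where m: "x = y * m" "[a * m = 1] (mod w)" by blast
  have "[m = u * (a * m)] (mod w)"
    using cong_scalar_right[OF inverse, of m] by (simp add: cong_sym_eq ac_simps)
  also have "[u * (a * m) = u] (mod w)"
    using cong_scalar_left[OF m(2), of u] by simp
  finally show "[x = y * u] (mod y * w)"
    unfolding m(1) by (rule cong_cmult_leftI)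
next
  assume x: "[x = y * u] (mod y * w)"
  then have "y dvd x"
    using cong_dvd_modulus_nat[OF x, of y] by (simp add: cong_dvd_iff)
  then obtain m where m: "x = y * m" ..
  have "[m = u] (mod w)"
    using x \<open>0 < y\<close> unfolding m cong_def by (simp add: mod_mult_mult1)
  then have "[a * m = 1] (mod w)"
    using cong_scalar_left inverse cong_trans by blast
  with m show "\<exists>m. x = y * m \<and> [a * m = 1] (mod w)" by blast
qed

definition descent_class :: "nat \<Rightarrow> nat set" where
  "descent_class l =
     {n. \<exists>m. n + 1 = 2 ^ (l + 1) * m \<and> [3 ^ (l + 1) * m = 1] (mod 2 ^ (log_gap l + 1))}"

lemma descent_class_residue_class:
  "\<exists>t<2 ^ (l + log_gap l + 2). descent_class l = {n. n mod 2 ^ (l + log_gap l + 2) = t}"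
proof -
  obtain u :: nat where u: "[3 ^ (l + 1) * u = 1] (mod 2 ^ (log_gap l + 1))"
    using cong_solve_coprime_nat[of "3 ^ (l + 1)" "2 ^ (log_gap l + 1)"] by auto
  have "descent_class l = {n. [n + 1 = 2 ^ (l + 1) * u] (mod 2 ^ (l + 1) * 2 ^ (log_gap l + 1))}"
    unfolding descent_class_def by (simp only: multiple_cong_iff[OF u] zero_less_power zero_less_numeral)
  also have "(2::nat) ^ (l + 1) * 2 ^ (log_gap l + 1) = 2 ^ (l + log_gap l + 2)"
    by (simp flip: power_add)
  finally show ?thesis
    using cong_succ_residue_class[of "2 ^ (l + log_gap l + 2)"] by simp
qed

lemma descent_class_Lfun:
  assumes "n \<in> descent_class l"
  shows "odd n" and "Lfun n = l"
proof -
  obtain m where n: "n + 1 = 2 ^ (l + 1) * m" and cong: "[3 ^ (l + 1) * m = 1] (mod 2 ^ (log_gap l + 1))"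
    using assms unfolding descent_class_def by blast
  have "[3 ^ (l + 1) * m = 1] (mod 2)"
    using cong_dvd_modulus_nat[OF cong] by simp
  then have "odd (3 ^ (l + 1) * m)"
    by (simp only: cong_def odd_iff_mod_2_eq_one) simp
  then have "odd m"
    by simp
  with n show "Lfun n = l" by (rule Lfun_eqI)
  have "even (n + 1)" using n by simp
  then show "odd n" by simp
qed

lemma descent_imp_descent_class:
  assumes "odd n" and "(syr ^^ (Lfun n + 1)) n < n"
  shows "n \<in> descent_class (Lfun n)"
proof -
  obtain m where n: "n + 1 = 2 ^ (Lfun n + 1) * m" and "odd m"
    using odd_Lfun_decompose[OF assms(1)] .
  then have "0 < m" by (simp add: odd_pos)
  from funpow_syr_descent_imp_cong[OF n this log_gap_bounds(1) assms(2)] n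
  show ?thesis unfolding descent_class_def by blast
qed

lemma descent_class_tail_imp_descent:
  assumes "n \<in> descent_class l" and "2 ^ (l + log_gap l + 2) \<le> n"
  shows "(syr ^^ (Lfun n + 1)) n < n"
proof -
  obtain m where n: "n + 1 = 2 ^ (l + 1) * m"
    and cong: "[3 ^ (l + 1) * m = 1] (mod 2 ^ (log_gap l + 1))"
    using assms(1) unfolding descent_class_def by blast
  have "2 ^ (l + 1) * 2 ^ (log_gap l + 1) = (2::nat) ^ (l + log_gap l + 2)"
    by (simp flip: power_add)
  also have "\<dots> < n + 1"
    using assms(2) by simp
  also have "\<dots> = 2 ^ (l + 1) * m"
    by (rule n)
  finally have "2 ^ (log_gap l + 1) \<le> m"
    by simp
  then show ?thesis
    using cong_imp_funpow_syr_descent[OF n log_gap_bounds(2) cong] descent_class_Lfun(2)[OF assms(1)]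
    by simp
qed

lemma descent_set_subset:
  fixes L :: nat
  shows "{n. odd n \<and> (syr ^^ (Lfun n + 1)) n < n}
    \<subseteq> (\<Union>l<L. descent_class l) \<union> {n. n mod 2 ^ (L + 1) = 2 ^ (L + 1) - 1}"
proof
  fix n assume "n \<in> {n. odd n \<and> (syr ^^ (Lfun n + 1)) n < n}"
  then have "odd n" and descent: "(syr ^^ (Lfun n + 1)) n < n" by simp_all
  show "n \<in> (\<Union>l<L. descent_class l) \<union> {n. n mod 2 ^ (L + 1) = 2 ^ (L + 1) - 1}"
  proof (cases "Lfun n < L")
    case True
    then show ?thesis
      using descent_imp_descent_class[OF \<open>odd n\<close> descent] by blast
  next
    case False
    obtain m where "n + 1 = 2 ^ (Lfun n + 1) * m"
      using odd_Lfun_decompose[OF \<open>odd n\<close>] .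
    moreover have "(2::nat) ^ (L + 1) dvd 2 ^ (Lfun n + 1)"
      using False by (simp add: le_imp_power_dvd)
    ultimately have "2 ^ (L + 1) dvd n + 1"
      by (metis dvd_mult2)
    then show ?thesis
      by (simp add: mod_eq_pred_if_dvd_succ)
  qed
qed

lemma summable_descent_class_density: "summable (\<lambda>l. 1 / real (2 ^ (l + log_gap l + 2)))"
proof (rule summable_comparison_test)
  have "1 / real (2 ^ (l + log_gap l + 2)) \<le> (1 / 2) ^ l" for l
  proof -
    have "(2::real) ^ l \<le> 2 ^ (l + log_gap l + 2)"
      by (rule power_increasing) simp_all
    then show ?thesis
      by (simp add: power_one_over frac_le)
  qed
  then show "\<exists>N. \<forall>l\<ge>N. norm (1 / real (2 ^ (l + log_gap l + 2))) \<le> (1 / 2) ^ l"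
    by simp
qed (simp add: summable_geometric)

lemma descent_set_density:
  "(\<lambda>N. real (count_below {n. odd n \<and> (syr ^^ (Lfun n + 1)) n < n} N) / real N)
     \<longlonglongrightarrow> (\<Sum>l. 1 / real (2 ^ (l + log_gap l + 2)))"
proof (rule density_between_residue_classes[where A = descent_class and b = "\<lambda>l. 2 ^ (l + log_gap l + 2)"
      and p = "\<lambda>L. 2 ^ (L + 1)" and R = "\<lambda>L. {n. n mod 2 ^ (L + 1) = 2 ^ (L + 1) - 1}"])
  show "descent_class l \<inter> {2 ^ (l + log_gap l + 2)..} \<subseteq> {n. odd n \<and> (syr ^^ (Lfun n + 1)) n < n}"
    for l
    using descent_class_Lfun(1) descent_class_tail_imp_descent by auto
  show "descent_class i \<inter> descent_class j = {}" if "i \<noteq> j" for i j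
    using that descent_class_Lfun(2) by blast
  show "(\<lambda>L. 1 / real (2 ^ (L + 1))) \<longlonglongrightarrow> 0"
    using LIMSEQ_Suc[OF LIMSEQ_power_zero[of "1 / 2 :: real"]] by (simp add: power_one_over)
  show "\<exists>t<(2::nat) ^ (L + 1). {n. n mod 2 ^ (L + 1) = 2 ^ (L + 1) - 1} = {n. n mod 2 ^ (L + 1) = t}" for L
    by (intro exI[of _ "2 ^ (L + 1) - 1"]) simp
qed (fact descent_class_residue_class descent_set_subset summable_descent_class_density)+

lemma descent_series_term:
  "(1 / 2) ^ (l + 1) * 2 powr (- real_of_int \<lfloor>(log 2 3 - 1) * real (l + 1)\<rfloor>)
     = 2 * (1 / real (2 ^ (l + log_gap l + 2)))"
  unfolding floor_eq_log_gap by (simp add: powr_minus_divide powr_realpow power_add field_simps)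

theorem mainTheorem13:
  shows "(\<lambda>N. real (card {n. n < N \<and> odd n \<and> (syr ^^ (Lfun n + 1)) n < n})
              / real (card {n. n < N \<and> odd n}))
         \<longlonglongrightarrow>
         (\<Sum>l. (1/2) ^ (l + 1) * 2 powr (- real_of_int \<lfloor>(log 2 3 - 1) * real (l + 1)\<rfloor>))"
proof -
  let ?G = "{n. odd n \<and> (syr ^^ (Lfun n + 1)) n < n}" and ?O = "{n. n mod 2 = 1}"
  have "(\<lambda>N. (real (count_below ?G N) / real N) / (real (count_below ?O N) / real N))
      \<longlonglongrightarrow> (\<Sum>l. 1 / real (2 ^ (l + log_gap l + 2))) / (1 / 2)"
    using tendsto_divide[OF descent_set_density density_residue_class[of 1 2]] by simp
  moreover have "(real (count_below ?G N) / real N) / (real (count_below ?O N) / real N)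
      = real (card {n. n < N \<and> odd n \<and> (syr ^^ (Lfun n + 1)) n < n}) / real (card {n. n < N \<and> odd n})"
    for N
    by (cases "N = 0") (simp_all add: count_below_def odd_iff_mod_2_eq_one)
  moreover have "(\<Sum>l. 1 / real (2 ^ (l + log_gap l + 2))) / (1 / 2)
      = (\<Sum>l. (1/2) ^ (l + 1) * 2 powr (- real_of_int \<lfloor>(log 2 3 - 1) * real (l + 1)\<rfloor>))"
    unfolding descent_series_term using suminf_mult[OF summable_descent_class_density, of 2] by simp
  ultimately show ?thesis
    by simp
qed

end
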